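(* For an integer $q\geq 2$ and arbitrary positive integers $c$ and $d$, $$P\big(S(c,\underbrace{d,\dots,d}_{q}),\lambda\big)=\mathbf{P}_d^{\,q-1}\left(\mathbf{P}_{c+d+1}-(q-1)\mathbf{P}_c\mathbf{P}_{d-1}\right).$$
   Context: For a graph $G$, $P(G,\lambda)=\det(\lambda I-A(G))$ is the characteristic polynomial of its adjacency matrix $A(G)$. $\mathbf{P}_m$ denotes $P(P_m,\lambda)$, the characteristic polynomial of the path $P_m$ on $m$ vertices, with the convention $\mathbf{P}_0=1$. For positive integers $c_1,\dots,c_m$, the starlike tree $S(c_1,\dots,c_m)$ is obtained from disjoint paths $P_{c_1+1},\dots,P_{c_m+1}$ by identifying one end vertex of each path into a single vertex (the center); the resulting pendant paths are the branches, of lengths $c_1,\dots,c_m$. *)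

theory Defs
  imports "Jordan_Normal_Form.Char_Poly"
begin

text \<open>A (simple) graph on the vertex set {0..<n} is given by a symmetric, irreflexive
  adjacency predicate; its adjacency matrix is the n x n 0/1 integer matrix.\<close>

definition adj_mat :: "nat \<Rightarrow> (nat \<Rightarrow> nat \<Rightarrow> bool) \<Rightarrow> int mat" where
  "adj_mat n E = mat n n (\<lambda>(i, j). if E i j then 1 else 0)"

definition graph_char_poly :: "nat \<Rightarrow> (nat \<Rightarrow> nat \<Rightarrow> bool) \<Rightarrow> int poly" where
  "graph_char_poly n E = char_poly (adj_mat n E)"

definition path_adj :: "nat \<Rightarrow> nat \<Rightarrow> bool" where
  "path_adj i j \<longleftrightarrow> i + 1 = j \<or> j + 1 = i"

definition path_poly :: "nat \<Rightarrow> int poly" where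
  "path_poly m = graph_char_poly m path_adj"

text \<open>Starlike tree S(c_1,...,c_m), given by the list cs = [c_1,...,c_m].
  Vertex 0 is the center; branch k (k < length cs) consists of the vertices
  b_k, b_k + 1, ..., b_k + c_k - 1 where b_k = 1 + c_1 + ... + c_(k-1);
  b_k is adjacent to the center, and consecutive branch vertices are adjacent.\<close>

definition branch_start :: "nat list \<Rightarrow> nat \<Rightarrow> nat" where
  "branch_start cs k = 1 + sum_list (take k cs)"

definition starlike_edge :: "nat list \<Rightarrow> nat \<Rightarrow> nat \<Rightarrow> bool" where
  "starlike_edge cs u v \<longleftrightarrow>
     (\<exists>k < length cs. (1 \<le> cs ! k \<and> u = 0 \<and> v = branch_start cs k) \<or>
        (\<exists>t. t + 1 < cs ! k \<and> u = branch_start cs k + t \<and> v = branch_start cs k + t + 1))"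

definition starlike_adj :: "nat list \<Rightarrow> nat \<Rightarrow> nat \<Rightarrow> bool" where
  "starlike_adj cs u v \<longleftrightarrow> starlike_edge cs u v \<or> starlike_edge cs v u"

definition starlike_poly :: "nat list \<Rightarrow> int poly" where
  "starlike_poly cs = graph_char_poly (1 + sum_list cs) (starlike_adj cs)"

end

theory Submission
  imports Defs
begin

text \<open>Write P_e for the characteristic polynomial of the path on e vertices. Expanding the
  determinant along a leaf v with neighbour u gives Schwenk's recurrence
  P(G) = x P(G - v) - P(G - v - u). Along a path this is P_(e+2) = x P_(e+1) - P_e, and since a
  solution of this recurrence is determined by two initial values, attaching a pendant path on
  e vertices at a vertex v of G gives P_e P(G) - P_(e-1) P(G - v), while adding a disjoint path
  on e vertices multiplies by P_e. Removing the center of a starlike tree leaves disjoint paths,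
  so adding a branch of length d to S(c, d^k) gives P_d P(S(c, d^k)) - P_(d-1) P_c P_d^k;
  induction on k, starting from the path S(c, d) with c + d + 1 vertices, gives the formula.\<close>

lemma det_col_single_nonzero:
  fixes A :: "'a :: comm_ring_1 mat"
  assumes "A \<in> carrier_mat n n" and "i < n" and "j < n"
    and "\<And>k. k < n \<Longrightarrow> k \<noteq> i \<Longrightarrow> A $$ (k, j) = 0"
  shows "det A = A $$ (i, j) * cofactor A i j"
proof -
  have "det A = (\<Sum>k<n. A $$ (k, j) * cofactor A k j)"
    using assms by (intro laplace_expansion_column) auto
  also have "\<dots> = (\<Sum>k<n. if k = i then A $$ (i, j) * cofactor A i j else 0)"
    using assms by (intro sum.cong) auto
  finally show ?thesis
    using assms by simp
qed

definition graph_char_matrix :: "nat \<Rightarrow> (nat \<Rightarrow> nat \<Rightarrow> bool) \<Rightarrow> int poly mat" where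
  "graph_char_matrix n E = char_poly_matrix (adj_mat n E)"

lemma graph_char_matrix_carrier: "graph_char_matrix n E \<in> carrier_mat n n"
  unfolding graph_char_matrix_def adj_mat_def by (rule char_poly_matrix_closed) auto

lemma graph_char_matrix_index:
  "i < n \<Longrightarrow> j < n \<Longrightarrow>
    graph_char_matrix n E $$ (i, j) = (if i = j then [:0, 1:] else 0) - (if E i j then 1 else 0)"
  unfolding graph_char_matrix_def adj_mat_def char_poly_matrix_def by (auto simp: one_pCons)

lemma graph_char_poly_eq_det: "graph_char_poly n E = det (graph_char_matrix n E)"
  unfolding graph_char_poly_def char_poly_def graph_char_matrix_def ..

lemma graph_char_poly_cong:
  "(\<And>i j. i < n \<Longrightarrow> j < n \<Longrightarrow> E i j = E' i j) \<Longrightarrow> graph_char_poly n E = graph_char_poly n E'"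
  unfolding graph_char_poly_def adj_mat_def by (intro arg_cong[where f = char_poly] eq_matI) auto

lemma graph_char_poly_0 [simp]: "graph_char_poly 0 E = 1"
  unfolding graph_char_poly_eq_det using graph_char_matrix_carrier by simp

lemma mat_delete_graph_char_matrix_last:
  "mat_delete (graph_char_matrix (Suc m) E) m m = graph_char_matrix m E"
  using graph_char_matrix_carrier[of m E] graph_char_matrix_carrier[of "Suc m" E]
  by (intro eq_matI) (auto simp: mat_delete_def graph_char_matrix_index)

lemma graph_char_poly_isolated:
  assumes "\<And>i. i \<le> m \<Longrightarrow> \<not> E i m"
  shows "graph_char_poly (Suc m) E = [:0, 1:] * graph_char_poly m E"
proof -
  let ?M = "graph_char_matrix (Suc m) E"
  have "det ?M = ?M $$ (m, m) * cofactor ?M m m"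
    using assms by (intro det_col_single_nonzero[OF graph_char_matrix_carrier])
      (auto simp: graph_char_matrix_index)
  then show ?thesis
    using assms
    by (simp add: graph_char_poly_eq_det graph_char_matrix_index cofactor_def
        mat_delete_graph_char_matrix_last)
qed

lemma cofactor_graph_char_matrix_leaf:
  assumes "u < m" and col: "\<And>i. i < m \<Longrightarrow> E i m \<longleftrightarrow> i = u"
  shows "cofactor (graph_char_matrix (Suc m) E) m u =
    graph_char_poly (m - 1) (\<lambda>i j. E (insert_index u i) (insert_index u j))"
proof -
  obtain p where m: "m = Suc p"
    using \<open>u < m\<close> by (cases m) auto
  define E' where "E' = (\<lambda>i j. E (insert_index u i) (insert_index u j))"
  define M where "M = graph_char_matrix (Suc m) E"
  define D where "D = mat_delete M m u"
  have M: "M \<in> carrier_mat (Suc m) (Suc m)"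
    unfolding M_def by (rule graph_char_matrix_carrier)
  have D: "D \<in> carrier_mat m m"
    unfolding D_def using mat_delete_carrier[OF M] by simp
  have D_index: "D $$ (i, j) = M $$ (i, insert_index u j)" if "i < m" "j < m" for i j
    using that M by (simp add: D_def mat_delete_def insert_index_def)
  \<comment> \<open>The last column of D is the old column m, whose only nonzero entry is -1 in row u.\<close>
  have "det D = D $$ (u, p) * cofactor D u p"
    using D m \<open>u < m\<close> col
    by (intro det_col_single_nonzero) (auto simp: D_index M_def graph_char_matrix_index)
  moreover have "D $$ (u, p) = -1"
    using D_index[of u p] m \<open>u < m\<close> col by (simp add: M_def graph_char_matrix_index)
  moreover have "mat_delete D u p = graph_char_matrix p E'"
  proof (rule eq_matI)
    fix i j
    assume "i < dim_row (graph_char_matrix p E')" "j < dim_col (graph_char_matrix p E')"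
    then have ij: "i < p" "j < p"
      using graph_char_matrix_carrier[of p E'] by auto
    have "mat_delete D u p $$ (i, j) = D $$ (insert_index u i, j)"
      using ij D m \<open>u < m\<close> by (simp add: mat_delete_def insert_index_def)
    also have "\<dots> = graph_char_matrix p E' $$ (i, j)"
      using ij m by (subst D_index) (auto simp: M_def E'_def graph_char_matrix_index insert_index_def)
    finally show "mat_delete D u p $$ (i, j) = graph_char_matrix p E' $$ (i, j)" .
  qed (use D m graph_char_matrix_carrier[of p E'] in auto)
  ultimately have "det D = - ((-1) ^ (u + p) * graph_char_poly p E')"
    by (simp add: cofactor_def graph_char_poly_eq_det)
  then have "cofactor M m u = - ((-1) ^ (m + u) * (-1) ^ (u + p)) * graph_char_poly p E'"
    by (simp add: cofactor_def flip: D_def)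
  also have "(-1 :: int poly) ^ (m + u) * (-1) ^ (u + p) = - 1"
    by (simp add: m power_add[symmetric]) (simp add: algebra_simps)
  finally show ?thesis
    by (simp add: M_def E'_def m)
qed

lemma graph_char_poly_leaf:
  assumes "u < m"
    and row: "\<And>j. j \<le> m \<Longrightarrow> E m j \<longleftrightarrow> j = u"
    and col: "\<And>i. i \<le> m \<Longrightarrow> E i m \<longleftrightarrow> i = u"
  shows "graph_char_poly (Suc m) E = [:0, 1:] * graph_char_poly m E
    - graph_char_poly (m - 1) (\<lambda>i j. E (insert_index u i) (insert_index u j))"
proof -
  define M where "M = graph_char_matrix (Suc m) E"
  have "det M = (\<Sum>j<Suc m. M $$ (m, j) * cofactor M m j)"
    unfolding M_def by (intro laplace_expansion_row graph_char_matrix_carrier) auto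
  also have "\<dots> = (\<Sum>j<Suc m. (if j = m then [:0, 1:] * cofactor M m m else 0)
      - (if j = u then cofactor M m u else 0))"
    using row \<open>u < m\<close> by (intro sum.cong) (auto simp: M_def graph_char_matrix_index algebra_simps)
  also have "\<dots> = [:0, 1:] * graph_char_poly m E - cofactor M m u"
    using \<open>u < m\<close>
    by (simp add: sum_subtractf cofactor_def M_def mat_delete_graph_char_matrix_last
        graph_char_poly_eq_det)
  finally show ?thesis
    using cofactor_graph_char_matrix_leaf[of u m E] \<open>u < m\<close> col
    by (simp add: M_def graph_char_poly_eq_det)
qed

lemma graph_char_poly_last_leaf:
  assumes "\<And>j. j \<le> Suc m \<Longrightarrow> E (Suc m) j \<longleftrightarrow> j = m"
    and "\<And>i. i \<le> Suc m \<Longrightarrow> E i (Suc m) \<longleftrightarrow> i = m"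
  shows "graph_char_poly (Suc (Suc m)) E = [:0, 1:] * graph_char_poly (Suc m) E - graph_char_poly m E"
proof -
  have "graph_char_poly m (\<lambda>i j. E (insert_index m i) (insert_index m j)) = graph_char_poly m E"
    by (rule graph_char_poly_cong) simp
  then show ?thesis
    using graph_char_poly_leaf[of m "Suc m" E] assms by simp
qed

lemma second_order_recurrence_unique:
  assumes "\<And>n. f (Suc (Suc n)) = F (f (Suc n)) (f n)"
    and "\<And>n. g (Suc (Suc n)) = F (g (Suc n)) (g n)"
    and "f 0 = g 0" and "f (Suc 0) = g (Suc 0)"
  shows "f n = g n"
proof -
  have "f n = g n \<and> f (Suc n) = g (Suc n)"
    by (induction n) (use assms in auto)
  then show ?thesis ..
qed

lemma path_poly_0 [simp]: "path_poly 0 = 1"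
  unfolding path_poly_def by simp

lemma path_poly_1 [simp]: "path_poly (Suc 0) = [:0, 1:]"
  using graph_char_poly_isolated[of 0 path_adj] by (simp add: path_poly_def path_adj_def)

lemma path_poly_Suc_Suc: "path_poly (Suc (Suc n)) = [:0, 1:] * path_poly (Suc n) - path_poly n"
  unfolding path_poly_def by (rule graph_char_poly_last_leaf) (auto simp: path_adj_def)

text \<open>With n + e vertices, path_union n E is G = (n, E) together with a disjoint path on
  n, ..., n + e - 1 (the path part is unbounded; the vertex count cuts it off), and
  pendant_path n E v additionally joins the first path vertex n to v.\<close>

definition path_union :: "nat \<Rightarrow> (nat \<Rightarrow> nat \<Rightarrow> bool) \<Rightarrow> nat \<Rightarrow> nat \<Rightarrow> bool" where
  "path_union n E i j \<longleftrightarrow>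
    (i < n \<and> j < n \<and> E i j) \<or> (n \<le> i \<and> n \<le> j \<and> path_adj (i - n) (j - n))"

definition pendant_path :: "nat \<Rightarrow> (nat \<Rightarrow> nat \<Rightarrow> bool) \<Rightarrow> nat \<Rightarrow> nat \<Rightarrow> nat \<Rightarrow> bool" where
  "pendant_path n E v i j \<longleftrightarrow> path_union n E i j \<or> {i, j} = {v, n}"

lemma path_union_last:
  "j \<le> Suc (n + e) \<Longrightarrow> path_union n E (Suc (n + e)) j \<longleftrightarrow> j = n + e"
  "i \<le> Suc (n + e) \<Longrightarrow> path_union n E i (Suc (n + e)) \<longleftrightarrow> i = n + e"
  unfolding path_union_def path_adj_def by linarith+

lemma pendant_path_last:
  assumes "v < n"
  shows "pendant_path n E v (Suc (n + e)) j \<longleftrightarrow> path_union n E (Suc (n + e)) j"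
    and "pendant_path n E v i (Suc (n + e)) \<longleftrightarrow> path_union n E i (Suc (n + e))"
  using assms by (auto simp: pendant_path_def doubleton_eq_iff)

lemma pendant_path_restrict: "i < n \<Longrightarrow> j < n \<Longrightarrow> pendant_path n E v i j \<longleftrightarrow> E i j"
  by (auto simp: pendant_path_def path_union_def doubleton_eq_iff)

lemma pendant_path_attached:
  assumes "v < n"
  shows "j \<le> n \<Longrightarrow> pendant_path n E v n j \<longleftrightarrow> j = v"
    and "i \<le> n \<Longrightarrow> pendant_path n E v i n \<longleftrightarrow> i = v"
  using assms by (auto simp: pendant_path_def path_union_def path_adj_def doubleton_eq_iff)

lemma graph_char_poly_path_union_Suc_Suc:
  "graph_char_poly (n + Suc (Suc e)) (path_union n E) =
    [:0, 1:] * graph_char_poly (n + Suc e) (path_union n E)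
      - graph_char_poly (n + e) (path_union n E)"
  unfolding add_Suc_right by (rule graph_char_poly_last_leaf) (simp_all add: path_union_last)

lemma graph_char_poly_pendant_path_Suc_Suc:
  assumes "v < n"
  shows "graph_char_poly (n + Suc (Suc e)) (pendant_path n E v) =
    [:0, 1:] * graph_char_poly (n + Suc e) (pendant_path n E v)
      - graph_char_poly (n + e) (pendant_path n E v)"
  unfolding add_Suc_right
  by (rule graph_char_poly_last_leaf) (simp_all add: pendant_path_last[OF assms] path_union_last)

lemma graph_char_poly_path_union:
  "graph_char_poly (n + e) (path_union n E) = path_poly e * graph_char_poly n E"
proof (rule second_order_recurrence_unique[where F = "\<lambda>a b. [:0, 1:] * a - b"
      and f = "\<lambda>e. graph_char_poly (n + e) (path_union n E)"
      and g = "\<lambda>e. path_poly e * graph_char_poly n E"])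
  have restrict: "graph_char_poly n (path_union n E) = graph_char_poly n E"
    by (rule graph_char_poly_cong) (simp add: path_union_def)
  then show "graph_char_poly (n + 0) (path_union n E) = path_poly 0 * graph_char_poly n E"
    by simp
  show "graph_char_poly (n + Suc 0) (path_union n E) = path_poly (Suc 0) * graph_char_poly n E"
    using graph_char_poly_isolated[of n "path_union n E"] restrict
    by (simp add: path_union_def path_adj_def)
qed (simp_all only: graph_char_poly_path_union_Suc_Suc path_poly_Suc_Suc algebra_simps)

lemma graph_char_poly_pendant_vertex:
  assumes "v < n"
  shows "graph_char_poly (Suc n) (pendant_path n E v) = [:0, 1:] * graph_char_poly n E
    - graph_char_poly (n - 1) (\<lambda>i j. E (insert_index v i) (insert_index v j))"
proof -
  have "graph_char_poly n (pendant_path n E v) = graph_char_poly n E"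
    by (rule graph_char_poly_cong) (simp add: pendant_path_restrict)
  moreover have "graph_char_poly (n - 1) (\<lambda>i j. pendant_path n E v (insert_index v i) (insert_index v j)) =
      graph_char_poly (n - 1) (\<lambda>i j. E (insert_index v i) (insert_index v j))"
    using assms by (intro graph_char_poly_cong) (simp add: pendant_path_restrict insert_index_def)
  ultimately show ?thesis
    using assms graph_char_poly_leaf[of v n "pendant_path n E v"] by (simp add: pendant_path_attached)
qed

lemma graph_char_poly_pendant_path:
  assumes "v < n"
  shows "graph_char_poly (n + Suc e) (pendant_path n E v) = path_poly (Suc e) * graph_char_poly n E
    - path_poly e * graph_char_poly (n - 1) (\<lambda>i j. E (insert_index v i) (insert_index v j))"
proof -
  let ?G = "graph_char_poly n E"
  let ?H = "graph_char_poly (n - 1) (\<lambda>i j. E (insert_index v i) (insert_index v j))"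
  have restrict: "graph_char_poly n (pendant_path n E v) = ?G"
    by (rule graph_char_poly_cong) (simp add: pendant_path_restrict)
  have one: "graph_char_poly (n + Suc 0) (pendant_path n E v) = [:0, 1:] * ?G - ?H"
    using graph_char_poly_pendant_vertex[OF assms] by simp
  show ?thesis
  proof (rule second_order_recurrence_unique[where F = "\<lambda>a b. [:0, 1:] * a - b"
        and f = "\<lambda>e. graph_char_poly (n + Suc e) (pendant_path n E v)"
        and g = "\<lambda>e. path_poly (Suc e) * ?G - path_poly e * ?H"])
    show "graph_char_poly (n + Suc 0) (pendant_path n E v) = path_poly (Suc 0) * ?G - path_poly 0 * ?H"
      using one by simp
    have "graph_char_poly (n + Suc (Suc 0)) (pendant_path n E v) =
        [:0, 1:] * graph_char_poly (n + Suc 0) (pendant_path n E v)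
          - graph_char_poly (n + 0) (pendant_path n E v)"
      by (rule graph_char_poly_pendant_path_Suc_Suc[OF assms])
    also have "\<dots> = [:0, 1:] * ([:0, 1:] * ?G - ?H) - ?G"
      by (simp only: one restrict add_0_right)
    also have "\<dots> = path_poly (Suc (Suc 0)) * ?G - path_poly (Suc 0) * ?H"
      by (simp add: path_poly_Suc_Suc algebra_simps del: mult_pCons_left mult_pCons_right)
    finally show "graph_char_poly (n + Suc (Suc 0)) (pendant_path n E v) =
        path_poly (Suc (Suc 0)) * ?G - path_poly (Suc 0) * ?H" .
  qed (simp_all only: graph_char_poly_pendant_path_Suc_Suc[OF assms] path_poly_Suc_Suc algebra_simps)
qed

lemma pendant_path_path_adj: "pendant_path (Suc m) path_adj m i j \<longleftrightarrow> path_adj i j"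
  unfolding pendant_path_def path_union_def path_adj_def doubleton_eq_iff by presburger

lemma path_poly_add:
  "path_poly (Suc m + Suc e) = path_poly (Suc e) * path_poly (Suc m) - path_poly e * path_poly m"
proof -
  have delete_end: "graph_char_poly m (\<lambda>i j. path_adj (insert_index m i) (insert_index m j)) = path_poly m"
    unfolding path_poly_def by (rule graph_char_poly_cong) simp
  have "path_poly (Suc m + Suc e) = graph_char_poly (Suc m + Suc e) (pendant_path (Suc m) path_adj m)"
    unfolding path_poly_def by (rule graph_char_poly_cong) (simp add: pendant_path_path_adj)
  also have "\<dots> = path_poly (Suc e) * path_poly (Suc m) - path_poly e * path_poly m"
    using graph_char_poly_pendant_path[of m "Suc m" e path_adj] delete_end by (simp add: path_poly_def)
  finally show ?thesis .
qed

lemma starlike_edge_snoc: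
  "starlike_edge (cs @ [e]) u v \<longleftrightarrow> starlike_edge cs u v \<or>
     (0 < e \<and> u = 0 \<and> v = 1 + sum_list cs) \<or>
     (\<exists>t. t + 1 < e \<and> u = 1 + sum_list cs + t \<and> v = 1 + sum_list cs + t + 1)"
proof -
  have "branch_start (cs @ [e]) k = branch_start cs k" if "k < length cs" for k
    using that by (simp add: branch_start_def)
  moreover have "branch_start (cs @ [e]) (length cs) = 1 + sum_list cs"
    by (simp add: branch_start_def)
  ultimately show ?thesis
    unfolding starlike_edge_def length_append_singleton Ex_less_Suc
    by (auto simp: nth_append Suc_le_eq)
qed

lemma starlike_edge_less: "starlike_edge cs u v \<Longrightarrow> u < 1 + sum_list cs \<and> v < 1 + sum_list cs"
proof (induction cs arbitrary: u v rule: rev_induct)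
  case Nil
  then show ?case by (simp add: starlike_edge_def)
next
  case (snoc e cs)
  from snoc.prems show ?case
    using snoc.IH[of u v] by (auto simp: starlike_edge_snoc)
qed

lemma starlike_adj_snoc_iff:
  "starlike_adj (cs @ [e]) u v \<longleftrightarrow> starlike_adj cs u v \<or>
     (0 < e \<and> {u, v} = {0, 1 + sum_list cs}) \<or>
     (\<exists>t. t + 1 < e \<and> {u, v} = {1 + sum_list cs + t, 1 + sum_list cs + t + 1})"
  unfolding starlike_adj_def starlike_edge_snoc doubleton_eq_iff by blast

lemma shifted_path_edge_iff:
  assumes "i < n + e" and "j < n + e"
  shows "(\<exists>t. t + 1 < e \<and> {i, j} = {n + t, n + t + 1}) \<longleftrightarrow>
    n \<le> i \<and> n \<le> j \<and> path_adj (i - n) (j - n)"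
proof
  assume "n \<le> i \<and> n \<le> j \<and> path_adj (i - n) (j - n)"
  then have "{i, j} = {n + min (i - n) (j - n), n + min (i - n) (j - n) + 1}"
    by (auto simp: path_adj_def)
  with assms show "\<exists>t. t + 1 < e \<and> {i, j} = {n + t, n + t + 1}"
    by (intro exI[of _ "min (i - n) (j - n)"]) (auto simp: doubleton_eq_iff)
qed (auto simp: doubleton_eq_iff path_adj_def)

lemma starlike_adj_snoc:
  assumes "i < 1 + sum_list cs + e" and "j < 1 + sum_list cs + e"
  shows "starlike_adj (cs @ [e]) i j \<longleftrightarrow> pendant_path (1 + sum_list cs) (starlike_adj cs) 0 i j"
proof -
  have "starlike_adj cs i j \<longleftrightarrow> i < 1 + sum_list cs \<and> j < 1 + sum_list cs \<and> starlike_adj cs i j"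
    using starlike_edge_less[of cs i j] starlike_edge_less[of cs j i] by (auto simp: starlike_adj_def)
  moreover have "0 < e \<and> {i, j} = {0, 1 + sum_list cs} \<longleftrightarrow> {i, j} = {0, 1 + sum_list cs}"
    using assms by (auto simp: doubleton_eq_iff)
  ultimately show ?thesis
    unfolding starlike_adj_snoc_iff shifted_path_edge_iff[OF assms] pendant_path_def path_union_def
    by argo
qed

lemma pendant_path_Suc_Suc:
  "pendant_path (Suc n) E 0 (Suc i) (Suc j) \<longleftrightarrow> path_union n (\<lambda>i j. E (Suc i) (Suc j)) i j"
  by (simp add: pendant_path_def path_union_def doubleton_eq_iff)

lemma starlike_poly_snoc_eq_pendant_path:
  "starlike_poly (cs @ [e]) =
    graph_char_poly (1 + sum_list cs + e) (pendant_path (1 + sum_list cs) (starlike_adj cs) 0)"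
proof -
  have "1 + sum_list (cs @ [e]) = 1 + sum_list cs + e"
    by simp
  then show ?thesis
    unfolding starlike_poly_def by (simp only:) (rule graph_char_poly_cong, simp add: starlike_adj_snoc)
qed

lemma graph_char_poly_starlike_branches:
  "graph_char_poly (sum_list cs) (\<lambda>i j. starlike_adj cs (Suc i) (Suc j)) = prod_list (map path_poly cs)"
proof (induction cs rule: rev_induct)
  case Nil
  then show ?case by simp
next
  case (snoc e cs)
  have "graph_char_poly (sum_list (cs @ [e])) (\<lambda>i j. starlike_adj (cs @ [e]) (Suc i) (Suc j)) =
      graph_char_poly (sum_list cs + e) (path_union (sum_list cs) (\<lambda>i j. starlike_adj cs (Suc i) (Suc j)))"
    by (simp, rule graph_char_poly_cong) (simp add: starlike_adj_snoc flip: pendant_path_Suc_Suc)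
  also have "\<dots> = path_poly e * prod_list (map path_poly cs)"
    by (simp add: graph_char_poly_path_union snoc.IH)
  finally show ?case
    by (simp add: mult.commute)
qed

lemma starlike_poly_snoc:
  assumes "0 < e"
  shows "starlike_poly (cs @ [e]) =
    path_poly e * starlike_poly cs - path_poly (e - 1) * prod_list (map path_poly cs)"
proof -
  have "starlike_poly (cs @ [Suc (e - 1)]) = path_poly (Suc (e - 1)) * starlike_poly cs
      - path_poly (e - 1) * graph_char_poly (1 + sum_list cs - 1)
          (\<lambda>i j. starlike_adj cs (insert_index 0 i) (insert_index 0 j))"
    unfolding starlike_poly_snoc_eq_pendant_path starlike_poly_def[of cs]
    by (rule graph_char_poly_pendant_path) simp
  then show ?thesis
    using assms by (simp add: graph_char_poly_starlike_branches)
qed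

lemma starlike_poly_single: "starlike_poly [c] = path_poly (Suc c)"
proof -
  have "path_union 1 (starlike_adj []) = path_union 1 path_adj"
    by (intro ext) (auto simp: path_union_def starlike_adj_def starlike_edge_def path_adj_def)
  then have "pendant_path 1 (starlike_adj []) 0 = pendant_path 1 path_adj 0"
    unfolding pendant_path_def by metis
  also have "\<dots> = path_adj"
    using pendant_path_path_adj[of 0] by (intro ext) simp
  finally show ?thesis
    using starlike_poly_snoc_eq_pendant_path[of "[]" c] by (simp add: path_poly_def)
qed

lemma starlike_poly_replicate:
  assumes "0 < d"
  shows "starlike_poly (c # replicate (Suc k) d) =
    path_poly d ^ k * (path_poly (c + d + 1) - of_nat k * path_poly c * path_poly (d - 1))"
proof (induction k)
  case 0
  have "starlike_poly ([c] @ [d]) = path_poly d * path_poly (Suc c) - path_poly (d - 1) * path_poly c"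
    using starlike_poly_snoc[OF assms, of "[c]"] by (simp add: starlike_poly_single)
  also have "\<dots> = path_poly (c + d + 1)"
    using path_poly_add[of c "d - 1"] assms by simp
  finally show ?case
    by simp
next
  case (Suc k)
  have "c # replicate (Suc (Suc k)) d = (c # replicate (Suc k) d) @ [d]"
    by (simp add: replicate_append_same)
  then have "starlike_poly (c # replicate (Suc (Suc k)) d) =
      path_poly d * starlike_poly (c # replicate (Suc k) d)
      - path_poly (d - 1) * prod_list (map path_poly (c # replicate (Suc k) d))"
    by (simp only: starlike_poly_snoc[OF assms])
  also have "prod_list (map path_poly (c # replicate (Suc k) d)) = path_poly c * path_poly d ^ Suc k"
    by simp
  finally show ?case
    unfolding Suc.IH by (simp add: algebra_simps del: mult_pCons_left mult_pCons_right)
qed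

theorem lemma3:
  fixes q c d :: nat
  assumes "q \<ge> 2" and "c > 0" and "d > 0"
  shows "starlike_poly (c # replicate q d) =
    path_poly d ^ (q - 1) *
      (path_poly (c + d + 1) - of_nat (q - 1) * path_poly c * path_poly (d - 1))"
  using starlike_poly_replicate[OF \<open>d > 0\<close>, of c "q - 1"] \<open>q \<ge> 2\<close>
  by (simp add: Suc_diff_le)

end
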